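(* Let $K$ be a normal Hopf subalgebra of $H$. Then $C^2_H(K)=C(H)\cap K^{\perp}=\ker(\mathrm{res}^H_K)$.
   Context: Let $k$ be an algebraically closed field of characteristic $0$ and $H$ a finite-dimensional semisimple Hopf algebra over $k$ (comultiplication $\Delta(h)=\sum h_1\otimes h_2$, antipode $S$). A Hopf subalgebra $K$ is normal if $\sum h_1xS(h_2)\in K$ for all $h\in H$, $x\in K$. $C(H)\subseteq H^*$ is the character ring of $H$; $K^{\perp}=\{f\in H^*:f(K)=0\}$; $\mathrm{res}^H_K:C(H)\to C(K)$ is restriction of characters to $K$. $C^2_H(K)=\{\chi\in C(H):\sum x_1\chi(S(x_2))=0\text{ for all }x\in K\}$. *)

theory Defs
  imports "HOL-Computational_Algebra.Polynomial"
begin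

text \<open>
Coordinate model of a finite-dimensional Hopf algebra H over a field k.
H has a basis indexed by a finite type 'i; an element of H is its coordinate
vector 'i \<Rightarrow> 'k, an element of H\<otimes>H is ('i \<times> 'i) \<Rightarrow> 'k,
and an element f of H^* is given by its values f a = f(e_a) on basis vectors.
Structure constants:
  e_a e_b = sum_c m a b c e_c,  1 = sum_a u a e_a,
  Delta(e_a) = sum_{b,c} d a b c e_b \<otimes> e_c,  eps(e_a) = ep a,
  S(e_a) = sum_c s a c e_c.
\<close>

definition alg_closed :: "'k::field itself \<Rightarrow> bool" where
  "alg_closed _ \<longleftrightarrow> (\<forall>p::'k poly. degree p \<noteq> 0 \<longrightarrow> (\<exists>x. poly p x = 0))"

definition bv :: "'i \<Rightarrow> 'i \<Rightarrow> 'k::field" where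
  "bv a = (\<lambda>c. if c = a then 1 else 0)"

definition hmul :: "('i::finite \<Rightarrow> 'i \<Rightarrow> 'i \<Rightarrow> 'k::field) \<Rightarrow> ('i \<Rightarrow> 'k) \<Rightarrow> ('i \<Rightarrow> 'k) \<Rightarrow> ('i \<Rightarrow> 'k)" where
  "hmul m x y = (\<lambda>c. \<Sum>a\<in>UNIV. \<Sum>b\<in>UNIV. x a * y b * m a b c)"

definition comul :: "('i::finite \<Rightarrow> 'i \<Rightarrow> 'i \<Rightarrow> 'k::field) \<Rightarrow> ('i \<Rightarrow> 'k) \<Rightarrow> ('i \<times> 'i \<Rightarrow> 'k)" where
  "comul d x = (\<lambda>(b, c). \<Sum>a\<in>UNIV. x a * d a b c)"

definition counit :: "('i::finite \<Rightarrow> 'k::field) \<Rightarrow> ('i \<Rightarrow> 'k) \<Rightarrow> 'k" where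
  "counit ep x = (\<Sum>a\<in>UNIV. x a * ep a)"

definition antip :: "('i::finite \<Rightarrow> 'i \<Rightarrow> 'k::field) \<Rightarrow> ('i \<Rightarrow> 'k) \<Rightarrow> ('i \<Rightarrow> 'k)" where
  "antip s x = (\<lambda>c. \<Sum>a\<in>UNIV. x a * s a c)"

definition tens :: "('i \<Rightarrow> 'k::field) \<Rightarrow> ('i \<Rightarrow> 'k) \<Rightarrow> ('i \<times> 'i \<Rightarrow> 'k)" where
  "tens x y = (\<lambda>(b, c). x b * y c)"

definition tmul :: "('i::finite \<Rightarrow> 'i \<Rightarrow> 'i \<Rightarrow> 'k::field) \<Rightarrow> ('i \<times> 'i \<Rightarrow> 'k) \<Rightarrow> ('i \<times> 'i \<Rightarrow> 'k) \<Rightarrow> ('i \<times> 'i \<Rightarrow> 'k)" where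
  "tmul m w z = (\<lambda>(p, q). \<Sum>a\<in>UNIV. \<Sum>b\<in>UNIV. \<Sum>c\<in>UNIV. \<Sum>c'\<in>UNIV.
      w (a, b) * z (c, c') * m a c p * m b c' q)"

definition lin_span :: "('x \<Rightarrow> 'k::field) set \<Rightarrow> ('x \<Rightarrow> 'k) set" where
  "lin_span S = {f. \<exists>t r. finite t \<and> t \<subseteq> S \<and> f = (\<lambda>y. \<Sum>v\<in>t. r v * v y)}"

definition is_subspace :: "('x \<Rightarrow> 'k::field) set \<Rightarrow> bool" where
  "is_subspace V \<longleftrightarrow> (\<lambda>_. 0) \<in> V \<and> (\<forall>x\<in>V. \<forall>y\<in>V. (\<lambda>c. x c + y c) \<in> V)
      \<and> (\<forall>r. \<forall>x\<in>V. (\<lambda>c. r * x c) \<in> V)"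

definition is_hopf_algebra ::
  "('i::finite \<Rightarrow> 'i \<Rightarrow> 'i \<Rightarrow> 'k::field) \<Rightarrow> ('i \<Rightarrow> 'k) \<Rightarrow> ('i \<Rightarrow> 'i \<Rightarrow> 'i \<Rightarrow> 'k)
    \<Rightarrow> ('i \<Rightarrow> 'k) \<Rightarrow> ('i \<Rightarrow> 'i \<Rightarrow> 'k) \<Rightarrow> bool" where
  "is_hopf_algebra m u d ep s \<longleftrightarrow>
     (\<forall>x y z. hmul m (hmul m x y) z = hmul m x (hmul m y z)) \<and>
     (\<forall>x. hmul m u x = x \<and> hmul m x u = x) \<and>
     (\<forall>a p q r. (\<Sum>b\<in>UNIV. d a b r * d b p q) = (\<Sum>b\<in>UNIV. d a p b * d b q r)) \<and>
     (\<forall>a c. (\<Sum>b\<in>UNIV. ep b * d a b c) = (if a = c then 1 else 0)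
          \<and> (\<Sum>b\<in>UNIV. d a c b * ep b) = (if a = c then 1 else 0)) \<and>
     (\<forall>x y. comul d (hmul m x y) = tmul m (comul d x) (comul d y)) \<and>
     comul d u = tens u u \<and>
     (\<forall>x y. counit ep (hmul m x y) = counit ep x * counit ep y) \<and>
     counit ep u = 1 \<and>
     (\<forall>x. (\<lambda>c. \<Sum>p\<in>UNIV. \<Sum>q\<in>UNIV. comul d x (p, q) * hmul m (antip s (bv p)) (bv q) c)
            = (\<lambda>c. counit ep x * u c)) \<and>
     (\<forall>x. (\<lambda>c. \<Sum>p\<in>UNIV. \<Sum>q\<in>UNIV. comul d x (p, q) * hmul m (bv p) (antip s (bv q)) c)
            = (\<lambda>c. counit ep x * u c))"

text \<open>Semisimple algebra: the left regular module is semisimple, i.e. every left ideal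
  has a complementary left ideal.\<close>
definition is_left_ideal :: "('i::finite \<Rightarrow> 'i \<Rightarrow> 'i \<Rightarrow> 'k::field) \<Rightarrow> ('i \<Rightarrow> 'k) set \<Rightarrow> bool" where
  "is_left_ideal m L \<longleftrightarrow> is_subspace L \<and> (\<forall>h. \<forall>x\<in>L. hmul m h x \<in> L)"

definition semisimple_alg :: "('i::finite \<Rightarrow> 'i \<Rightarrow> 'i \<Rightarrow> 'k::field) \<Rightarrow> bool" where
  "semisimple_alg m \<longleftrightarrow> (\<forall>L. is_left_ideal m L \<longrightarrow>
     (\<exists>L'. is_left_ideal m L' \<and> L \<inter> L' = {\<lambda>_. 0} \<and>
           (\<forall>h. \<exists>x\<in>L. \<exists>y\<in>L'. h = (\<lambda>c. x c + y c))))"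

definition hopf_subalgebra ::
  "('i::finite \<Rightarrow> 'i \<Rightarrow> 'i \<Rightarrow> 'k::field) \<Rightarrow> ('i \<Rightarrow> 'k) \<Rightarrow> ('i \<Rightarrow> 'i \<Rightarrow> 'i \<Rightarrow> 'k)
    \<Rightarrow> ('i \<Rightarrow> 'i \<Rightarrow> 'k) \<Rightarrow> ('i \<Rightarrow> 'k) set \<Rightarrow> bool" where
  "hopf_subalgebra m u d s K \<longleftrightarrow> is_subspace K \<and> u \<in> K \<and>
     (\<forall>x\<in>K. \<forall>y\<in>K. hmul m x y \<in> K) \<and>
     (\<forall>x\<in>K. comul d x \<in> lin_span {tens y z | y z. y \<in> K \<and> z \<in> K}) \<and>
     (\<forall>x\<in>K. antip s x \<in> K)"

text \<open>Adjoint action: sum h_1 x S(h_2).\<close>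
definition adj ::
  "('i::finite \<Rightarrow> 'i \<Rightarrow> 'i \<Rightarrow> 'k::field) \<Rightarrow> ('i \<Rightarrow> 'i \<Rightarrow> 'i \<Rightarrow> 'k) \<Rightarrow> ('i \<Rightarrow> 'i \<Rightarrow> 'k)
     \<Rightarrow> ('i \<Rightarrow> 'k) \<Rightarrow> ('i \<Rightarrow> 'k) \<Rightarrow> ('i \<Rightarrow> 'k)" where
  "adj m d s h x = (\<lambda>c. \<Sum>p\<in>UNIV. \<Sum>q\<in>UNIV.
      comul d h (p, q) * hmul m (hmul m (bv p) x) (antip s (bv q)) c)"

definition normal_hopf_subalgebra ::
  "('i::finite \<Rightarrow> 'i \<Rightarrow> 'i \<Rightarrow> 'k::field) \<Rightarrow> ('i \<Rightarrow> 'k) \<Rightarrow> ('i \<Rightarrow> 'i \<Rightarrow> 'i \<Rightarrow> 'k)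
    \<Rightarrow> ('i \<Rightarrow> 'i \<Rightarrow> 'k) \<Rightarrow> ('i \<Rightarrow> 'k) set \<Rightarrow> bool" where
  "normal_hopf_subalgebra m u d s K \<longleftrightarrow> hopf_subalgebra m u d s K \<and>
     (\<forall>h. \<forall>x\<in>K. adj m d s h x \<in> K)"

definition fev :: "('i::finite \<Rightarrow> 'k::field) \<Rightarrow> ('i \<Rightarrow> 'k) \<Rightarrow> 'k" where
  "fev f x = (\<Sum>a\<in>UNIV. f a * x a)"

text \<open>Finite-dimensional representation of H of dimension n: rho a is the n\<times>n matrix
  (entries rho a i j, i,j < n) by which e_a acts; an algebra map H \<rightarrow> M_n(k).\<close>
definition is_rep :: "('i::finite \<Rightarrow> 'i \<Rightarrow> 'i \<Rightarrow> 'k::field) \<Rightarrow> ('i \<Rightarrow> 'k) \<Rightarrow> nat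
    \<Rightarrow> ('i \<Rightarrow> nat \<Rightarrow> nat \<Rightarrow> 'k) \<Rightarrow> bool" where
  "is_rep m u n rho \<longleftrightarrow>
     (\<forall>a b i j. i < n \<longrightarrow> j < n \<longrightarrow>
        (\<Sum>l<n. rho a i l * rho b l j) = (\<Sum>c\<in>UNIV. m a b c * rho c i j)) \<and>
     (\<forall>i j. i < n \<longrightarrow> j < n \<longrightarrow> (\<Sum>a\<in>UNIV. u a * rho a i j) = (if i = j then 1 else 0))"

definition character :: "nat \<Rightarrow> ('i \<Rightarrow> nat \<Rightarrow> nat \<Rightarrow> 'k::field) \<Rightarrow> ('i \<Rightarrow> 'k)" where
  "character n rho = (\<lambda>a. \<Sum>i<n. rho a i i)"

definition char_ring :: "('i::finite \<Rightarrow> 'i \<Rightarrow> 'i \<Rightarrow> 'k::field) \<Rightarrow> ('i \<Rightarrow> 'k) \<Rightarrow> ('i \<Rightarrow> 'k) set" where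
  "char_ring m u = lin_span {character n rho | n rho. is_rep m u n rho}"

definition perp :: "('i::finite \<Rightarrow> 'k::field) set \<Rightarrow> ('i \<Rightarrow> 'k) set" where
  "perp K = {f. \<forall>x\<in>K. fev f x = 0}"

text \<open>Restriction of a functional to K, as a function on K (zero outside K).\<close>
definition res :: "('i::finite \<Rightarrow> 'k::field) set \<Rightarrow> ('i \<Rightarrow> 'k) \<Rightarrow> (('i \<Rightarrow> 'k) \<Rightarrow> 'k)" where
  "res K chi = (\<lambda>x. if x \<in> K then fev chi x else 0)"

definition ker_res :: "('i::finite \<Rightarrow> 'i \<Rightarrow> 'i \<Rightarrow> 'k::field) \<Rightarrow> ('i \<Rightarrow> 'k) \<Rightarrow> ('i \<Rightarrow> 'k) set
    \<Rightarrow> ('i \<Rightarrow> 'k) set" where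
  "ker_res m u K = {chi \<in> char_ring m u. res K chi = (\<lambda>_. 0)}"

text \<open>C^2_H(K) = {chi \<in> C(H). sum x_1 chi(S(x_2)) = 0 for all x \<in> K}.\<close>
definition C2 :: "('i::finite \<Rightarrow> 'i \<Rightarrow> 'i \<Rightarrow> 'k::field) \<Rightarrow> ('i \<Rightarrow> 'k) \<Rightarrow> ('i \<Rightarrow> 'i \<Rightarrow> 'i \<Rightarrow> 'k)
    \<Rightarrow> ('i \<Rightarrow> 'i \<Rightarrow> 'k) \<Rightarrow> ('i \<Rightarrow> 'k) set \<Rightarrow> ('i \<Rightarrow> 'k) set" where
  "C2 m u d s K = {chi \<in> char_ring m u. \<forall>x\<in>K.
      (\<lambda>c. \<Sum>q\<in>UNIV. comul d x (c, q) * fev chi (antip s (bv q))) = (\<lambda>_. 0)}"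

end

theory Submission
  imports Defs "HOL-Library.Function_Algebras"
begin

text \<open>
  The second equation is a restatement of the definitions. For the first, the inclusion
  C(H) \<inter> K^\<perp> \<subseteq> C^2_H(K) holds because \<Delta>(K) \<subseteq> K \<otimes> K and S(K) \<subseteq> K. For the converse,
  applying \<epsilon> to the first leg of x_1 \<chi>(S(x_2)) = 0 shows that \<chi> vanishes on S(K), so it
  suffices that S(K) = K. Since K is S-stable and finite-dimensional, this follows from
  injectivity of S, which is proved with a normalised left integral L (it exists by
  semisimplicity): the transfer identity L_1 \<otimes> h L_2 = S(h) L_1 \<otimes> L_2 lets one write
  1 = \<psi>(L_1) L_2, whence h = \<psi>(S(h) L_1) L_2, so S(h) = 0 forces h = 0.
\<close>

lemma bv_times [simp]: "bv a x * f = (if x = a then f else 0)"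
  by (simp add: bv_def)

lemma times_bv [simp]: "f * bv a x = (if x = a then f else 0)"
  by (simp add: bv_def)

lemma if_zero_times [simp]: "(if P then (f::'k::field) else 0) * g = (if P then f * g else 0)"
  by simp

lemma times_if_zero [simp]: "g * (if P then (f::'k::field) else 0) = (if P then g * f else 0)"
  by simp

lemma sum_if_zero [simp]:
  "(\<Sum>x\<in>A. if P then f x else (0::'k::field)) = (if P then sum f A else 0)"
  by simp

lemma hmul_bv: "hmul m (bv a) (bv b) = m a b"
  by (rule ext) (simp add: hmul_def bv_def)

lemma sum_push2:
  "(\<Sum>q\<in>A. \<Sum>x1\<in>B1. \<Sum>x2\<in>B2. f q x1 x2) = (\<Sum>x1\<in>B1. \<Sum>x2\<in>B2. \<Sum>q\<in>A. f q x1 x2)"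
  by (subst sum.swap, rule sum.cong[OF refl], rule sum.swap)

lemma sum_push3:
  "(\<Sum>q\<in>A. \<Sum>x1\<in>B1. \<Sum>x2\<in>B2. \<Sum>x3\<in>B3. f q x1 x2 x3)
     = (\<Sum>x1\<in>B1. \<Sum>x2\<in>B2. \<Sum>x3\<in>B3. \<Sum>q\<in>A. f q x1 x2 x3)"
  by (subst sum.swap, rule sum.cong[OF refl], rule sum_push2)

lemma sum_push4:
  "(\<Sum>q\<in>A. \<Sum>x1\<in>B1. \<Sum>x2\<in>B2. \<Sum>x3\<in>B3. \<Sum>x4\<in>B4. f q x1 x2 x3 x4)
     = (\<Sum>x1\<in>B1. \<Sum>x2\<in>B2. \<Sum>x3\<in>B3. \<Sum>x4\<in>B4. \<Sum>q\<in>A. f q x1 x2 x3 x4)"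
  by (subst sum.swap, rule sum.cong[OF refl], rule sum_push3)

lemma sum_push5:
  "(\<Sum>q\<in>A. \<Sum>x1\<in>B1. \<Sum>x2\<in>B2. \<Sum>x3\<in>B3. \<Sum>x4\<in>B4. \<Sum>x5\<in>B5. f q x1 x2 x3 x4 x5)
     = (\<Sum>x1\<in>B1. \<Sum>x2\<in>B2. \<Sum>x3\<in>B3. \<Sum>x4\<in>B4. \<Sum>x5\<in>B5. \<Sum>q\<in>A. f q x1 x2 x3 x4 x5)"
  by (subst sum.swap, rule sum.cong[OF refl], rule sum_push4)

lemma hopf_assoc_sc:
  assumes "is_hopf_algebra m u d ep s"
  shows "(\<Sum>t\<in>UNIV. m a b t * m t c p) = (\<Sum>t\<in>UNIV. m b c t * m a t p)"
proof -
  have "hmul m (hmul m (bv a) (bv b)) (bv c) = hmul m (bv a) (hmul m (bv b) (bv c))"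
    using assms unfolding is_hopf_algebra_def by blast
  then have "hmul m (hmul m (bv a) (bv b)) (bv c) p = hmul m (bv a) (hmul m (bv b) (bv c)) p"
    by simp
  then show ?thesis by (simp add: hmul_bv, simp add: hmul_def bv_def)
qed

lemma hopf_unit_sc:
  assumes "is_hopf_algebra m u d ep s"
  shows "(\<Sum>t\<in>UNIV. u t * m t b c) = (if b = c then 1 else 0)"
proof -
  have "hmul m u (bv b) c = bv b c"
    using assms unfolding is_hopf_algebra_def by metis
  then show ?thesis by (simp add: hmul_def bv_def)
qed

lemma hopf_coassoc_sc:
  assumes "is_hopf_algebra m u d ep s"
  shows "(\<Sum>b\<in>UNIV. d a b r * d b p q) = (\<Sum>b\<in>UNIV. d a p b * d b q r)"
  using assms unfolding is_hopf_algebra_def by blast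

lemma hopf_counit_sc:
  assumes "is_hopf_algebra m u d ep s"
  shows "(\<Sum>b\<in>UNIV. ep b * d a b c) = (if a = c then 1 else 0)"
    and "(\<Sum>b\<in>UNIV. d a c b * ep b) = (if a = c then 1 else 0)"
  using assms unfolding is_hopf_algebra_def by blast+

lemma hopf_antipode_sc:
  assumes "is_hopf_algebra m u d ep s"
  shows "(\<Sum>a1\<in>UNIV. \<Sum>b1\<in>UNIV. d x a1 b1 * (\<Sum>r\<in>UNIV. s a1 r * m r b1 t)) = ep x * u t"
proof -
  have "(\<lambda>c. \<Sum>p\<in>UNIV. \<Sum>q\<in>UNIV. comul d (bv x) (p, q) * hmul m (antip s (bv p)) (bv q) c)
      = (\<lambda>c. counit ep (bv x) * u c)"
    using assms unfolding is_hopf_algebra_def by blast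
  then have "(\<Sum>p\<in>UNIV. \<Sum>q\<in>UNIV. comul d (bv x) (p, q) * hmul m (antip s (bv p)) (bv q) t)
      = counit ep (bv x) * u t"
    by metis
  then show ?thesis by (simp add: comul_def counit_def hmul_def antip_def)
qed

lemma antipode_cancel_left:
  assumes H: "is_hopf_algebra m u d ep s"
  shows "(\<Sum>a1\<in>UNIV. \<Sum>b1\<in>UNIV. d x a1 b1 * (\<Sum>r\<in>UNIV. s a1 r * (\<Sum>t\<in>UNIV. m r b1 t * m t y p)))
      = ep x * (if y = p then 1 else 0)"
proof -
  have "(\<Sum>a1\<in>UNIV. \<Sum>b1\<in>UNIV. d x a1 b1 * (\<Sum>r\<in>UNIV. s a1 r * (\<Sum>t\<in>UNIV. m r b1 t * m t y p)))
      = (\<Sum>a1\<in>UNIV. \<Sum>b1\<in>UNIV. \<Sum>r\<in>UNIV. \<Sum>t\<in>UNIV. d x a1 b1 * s a1 r * m r b1 t * m t y p)"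
    by (simp add: sum_distrib_left mult_ac)
  also have "\<dots> = (\<Sum>t\<in>UNIV. \<Sum>a1\<in>UNIV. \<Sum>b1\<in>UNIV. \<Sum>r\<in>UNIV. d x a1 b1 * s a1 r * m r b1 t * m t y p)"
    by (rule sum_push3[symmetric])
  also have "\<dots> = (\<Sum>t\<in>UNIV. (\<Sum>a1\<in>UNIV. \<Sum>b1\<in>UNIV. d x a1 b1 * (\<Sum>r\<in>UNIV. s a1 r * m r b1 t)) * m t y p)"
    by (simp add: sum_distrib_left sum_distrib_right mult_ac)
  also have "\<dots> = (\<Sum>t\<in>UNIV. ep x * (u t * m t y p))"
    by (simp add: hopf_antipode_sc[OF H] mult_ac)
  also have "\<dots> = ep x * (if y = p then 1 else 0)"
    by (simp add: sum_distrib_left[symmetric] hopf_unit_sc[OF H])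
  finally show ?thesis .
qed

definition left_integral :: "('i::finite \<Rightarrow> 'i \<Rightarrow> 'i \<Rightarrow> 'k::field) \<Rightarrow> ('i \<Rightarrow> 'k) \<Rightarrow> ('i \<Rightarrow> 'k) \<Rightarrow> bool"
  where "left_integral m ep L \<longleftrightarrow> (\<forall>h. hmul m h L = (\<lambda>c. counit ep h * L c))"

lemma counit_add: "counit ep (\<lambda>c. x c + y c) = counit ep x + counit ep y"
  by (simp add: counit_def sum.distrib algebra_simps)

lemma counit_scale: "counit ep (\<lambda>c. r * x c) = r * counit ep x"
  by (simp add: counit_def sum_distrib_left algebra_simps)

text \<open>In a semisimple Hopf algebra the kernel of \<epsilon> has a complementary left ideal L';
  the component L of 1 in L' satisfies \<epsilon>(L) = 1, and h L - \<epsilon>(h) L \<in> ker \<epsilon> \<inter> L' = 0.\<close>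
lemma left_integral_exists:
  assumes H: "is_hopf_algebra m u d ep s" and SS: "semisimple_alg m"
  obtains L where "counit ep L = 1" and "left_integral m ep L"
proof -
  have counit_mult: "\<And>x y. counit ep (hmul m x y) = counit ep x * counit ep y"
    and counit_unit: "counit ep u = 1"
    using H unfolding is_hopf_algebra_def by blast+
  let ?Ker = "{x. counit ep x = 0}"
  have "counit ep (\<lambda>_. 0) = 0" by (simp add: counit_def)
  then have "is_left_ideal m ?Ker"
    unfolding is_left_ideal_def is_subspace_def
    by (simp add: counit_add counit_scale counit_mult)
  then obtain L' where L': "is_left_ideal m L'" "?Ker \<inter> L' = {\<lambda>_. 0}"
     "\<forall>h. \<exists>x\<in>?Ker. \<exists>y\<in>L'. h = (\<lambda>c. x c + y c)"
    using SS unfolding semisimple_alg_def by (elim allE impE) blast+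
  then obtain x L where xL: "x \<in> ?Ker" "L \<in> L'" "u = (\<lambda>c. x c + L c)" by blast
  have L1: "counit ep L = 1" using xL counit_unit by (simp add: counit_add)
  have "hmul m h L = (\<lambda>c. counit ep h * L c)" for h
  proof -
    let ?z = "\<lambda>c. hmul m h L c + (- counit ep h) * L c"
    have ideal: "\<forall>x\<in>L'. \<forall>y\<in>L'. (\<lambda>c. x c + y c) \<in> L'" "\<forall>r. \<forall>x\<in>L'. (\<lambda>c. r * x c) \<in> L'"
      "\<forall>h. \<forall>x\<in>L'. hmul m h x \<in> L'"
      using L'(1) unfolding is_left_ideal_def is_subspace_def by blast+
    have "?z \<in> L'"
      using ideal(1)[rule_format, OF ideal(3)[rule_format, OF xL(2)] ideal(2)[rule_format, OF xL(2)]] .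
    moreover have "counit ep ?z = 0"
      by (simp only: counit_add counit_scale counit_mult L1) simp
    ultimately have "?z = (\<lambda>_. 0)" using L'(2) by blast
    then have "hmul m h L c + - counit ep h * L c = 0" for c
      by (rule fun_cong)
    then show ?thesis by (simp add: fun_eq_iff add_eq_0_iff)
  qed
  then show ?thesis using that L1 unfolding left_integral_def by blast
qed

text \<open>Comultiplying h L = \<epsilon>(h) L gives  h_1 L_1 \<otimes> h_2 L_2 = \<epsilon>(h) L_1 \<otimes> L_2, in coordinates.\<close>
lemma integral_comul:
  assumes H: "is_hopf_algebra m u d ep s" and L: "left_integral m ep L"
  shows "(\<Sum>a1\<in>UNIV. \<Sum>a2\<in>UNIV. \<Sum>y1\<in>UNIV. \<Sum>y2\<in>UNIV.
            d a a1 a2 * comul d L (y1, y2) * m a1 y1 p * m a2 y2 q)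
     = ep a * comul d L (p, q)"
proof -
  have "comul d (hmul m (bv a) L) = tmul m (comul d (bv a)) (comul d L)"
    using H unfolding is_hopf_algebra_def by blast
  then have "comul d (hmul m (bv a) L) (p, q) = tmul m (comul d (bv a)) (comul d L) (p, q)"
    by simp
  moreover have "hmul m (bv a) L = (\<lambda>c. ep a * L c)"
    using L by (simp add: left_integral_def counit_def bv_def)
  moreover have "comul d (\<lambda>c. ep a * L c) (p, q) = ep a * comul d L (p, q)"
    by (simp add: comul_def sum_distrib_left mult_ac)
  moreover have "comul d (bv a) (x, y) = d a x y" for x y
    by (simp add: comul_def bv_def)
  ultimately show ?thesis by (simp add: tmul_def)
qed

text \<open>Expansion half of the transfer identity: for a left integral L and h = e_a,
  S(h) L_1 \<otimes> L_2 = S(h_1) (h_2 L)_1 \<otimes> (h_2 L)_2 = S(h_1) h_2 L_1 \<otimes> h_3 L_2,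
  where h_1 \<otimes> h_2 \<otimes> h_3 = (id \<otimes> \<Delta>)\<Delta>(h).\<close>
lemma integral_transfer_expand:
  assumes H: "is_hopf_algebra m u d ep s" and L: "left_integral m ep L"
  defines "D \<equiv> \<lambda>p q. comul d L (p, q)"
  shows "(\<Sum>r\<in>UNIV. s a r * (\<Sum>q\<in>UNIV. m r q p * D q c))
    = (\<Sum>a1\<in>UNIV. \<Sum>a2\<in>UNIV. \<Sum>b1\<in>UNIV. \<Sum>b2\<in>UNIV. \<Sum>y1\<in>UNIV. \<Sum>y2\<in>UNIV.
         d a a1 a2 * d a2 b1 b2 * D y1 y2 * m b2 y2 c
           * (\<Sum>r\<in>UNIV. s a1 r * (\<Sum>t\<in>UNIV. m r b1 t * m t y1 p)))"
proof -
  have E1: "(\<Sum>a1\<in>UNIV. \<Sum>a2\<in>UNIV. \<Sum>y1\<in>UNIV. \<Sum>y2\<in>UNIV. d a a1 a2 * D y1 y2 * m a1 y1 p * m a2 y2 q)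
      = ep a * D p q" for a p q
    unfolding D_def by (rule integral_comul[OF H L])
  have "(\<Sum>r\<in>UNIV. s a r * (\<Sum>q\<in>UNIV. m r q p * D q c))
     = (\<Sum>r\<in>UNIV. (\<Sum>a1\<in>UNIV. (\<Sum>a2\<in>UNIV. d a a1 a2 * ep a2) * s a1 r) * (\<Sum>q\<in>UNIV. m r q p * D q c))"
    by (simp add: hopf_counit_sc(2)[OF H])
  also have "\<dots> = (\<Sum>r\<in>UNIV. \<Sum>a1\<in>UNIV. \<Sum>a2\<in>UNIV. d a a1 a2 * s a1 r * (\<Sum>q\<in>UNIV. m r q p * (ep a2 * D q c)))"
    by (simp add: sum_distrib_left sum_distrib_right mult_ac)
  also have "\<dots> = (\<Sum>a1\<in>UNIV. \<Sum>a2\<in>UNIV. \<Sum>r\<in>UNIV. d a a1 a2 * s a1 r * (\<Sum>q\<in>UNIV. m r q p * (ep a2 * D q c)))"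
    by (rule sum_push2)
  also have "\<dots> = (\<Sum>a1\<in>UNIV. \<Sum>a2\<in>UNIV. \<Sum>r\<in>UNIV. d a a1 a2 * s a1 r * (\<Sum>q\<in>UNIV. m r q p *
       (\<Sum>b1\<in>UNIV. \<Sum>b2\<in>UNIV. \<Sum>y1\<in>UNIV. \<Sum>y2\<in>UNIV. d a2 b1 b2 * D y1 y2 * m b1 y1 q * m b2 y2 c)))"
    by (simp only: E1)
  also have "\<dots> = (\<Sum>a1\<in>UNIV. \<Sum>a2\<in>UNIV. \<Sum>r\<in>UNIV. \<Sum>b1\<in>UNIV. \<Sum>b2\<in>UNIV. \<Sum>y1\<in>UNIV. \<Sum>y2\<in>UNIV.
       d a a1 a2 * s a1 r * d a2 b1 b2 * D y1 y2 * m b2 y2 c * (\<Sum>q\<in>UNIV. m r q p * m b1 y1 q))"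
  proof (rule sum.cong[OF refl])+
    fix a1 a2 r
    have "(\<Sum>q\<in>UNIV. \<Sum>b1\<in>UNIV. \<Sum>b2\<in>UNIV. \<Sum>y1\<in>UNIV. \<Sum>y2\<in>UNIV.
        d a a1 a2 * s a1 r * d a2 b1 b2 * D y1 y2 * m b2 y2 c * (m r q p * m b1 y1 q))
      = (\<Sum>b1\<in>UNIV. \<Sum>b2\<in>UNIV. \<Sum>y1\<in>UNIV. \<Sum>y2\<in>UNIV. \<Sum>q\<in>UNIV.
        d a a1 a2 * s a1 r * d a2 b1 b2 * D y1 y2 * m b2 y2 c * (m r q p * m b1 y1 q))"
      by (rule sum_push4)
    then show "d a a1 a2 * s a1 r * (\<Sum>q\<in>UNIV. m r q p *
       (\<Sum>b1\<in>UNIV. \<Sum>b2\<in>UNIV. \<Sum>y1\<in>UNIV. \<Sum>y2\<in>UNIV. d a2 b1 b2 * D y1 y2 * m b1 y1 q * m b2 y2 c))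
      = (\<Sum>b1\<in>UNIV. \<Sum>b2\<in>UNIV. \<Sum>y1\<in>UNIV. \<Sum>y2\<in>UNIV.
       d a a1 a2 * s a1 r * d a2 b1 b2 * D y1 y2 * m b2 y2 c * (\<Sum>q\<in>UNIV. m r q p * m b1 y1 q))"
      by (simp add: sum_distrib_left sum_distrib_right mult_ac)
  qed
  also have "\<dots> = (\<Sum>a1\<in>UNIV. \<Sum>a2\<in>UNIV. \<Sum>r\<in>UNIV. \<Sum>b1\<in>UNIV. \<Sum>b2\<in>UNIV. \<Sum>y1\<in>UNIV. \<Sum>y2\<in>UNIV.
       d a a1 a2 * d a2 b1 b2 * D y1 y2 * m b2 y2 c * (s a1 r * (\<Sum>t\<in>UNIV. m r b1 t * m t y1 p)))"
    by (simp add: hopf_assoc_sc[OF H] mult_ac)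
  also have "\<dots> = (\<Sum>a1\<in>UNIV. \<Sum>a2\<in>UNIV. \<Sum>b1\<in>UNIV. \<Sum>b2\<in>UNIV. \<Sum>y1\<in>UNIV. \<Sum>y2\<in>UNIV. \<Sum>r\<in>UNIV.
       d a a1 a2 * d a2 b1 b2 * D y1 y2 * m b2 y2 c * (s a1 r * (\<Sum>t\<in>UNIV. m r b1 t * m t y1 p)))"
    by (rule sum.cong[OF refl], rule sum.cong[OF refl], rule sum_push4)
  finally show ?thesis by (simp add: sum_distrib_left)
qed

text \<open>Collapsing half, valid for any tensor D = \<Sum> D p q e_p \<otimes> e_q: by coassociativity,
  the antipode axiom and the counit axiom, S(h_1) h_2 D_1 \<otimes> h_3 D_2 = D_1 \<otimes> h D_2.\<close>
lemma integral_transfer_collapse: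
  assumes H: "is_hopf_algebra m u d ep s"
  shows "(\<Sum>a1\<in>UNIV. \<Sum>a2\<in>UNIV. \<Sum>b1\<in>UNIV. \<Sum>b2\<in>UNIV. \<Sum>y1\<in>UNIV. \<Sum>y2\<in>UNIV.
         d a a1 a2 * d a2 b1 b2 * D y1 y2 * m b2 y2 c
           * (\<Sum>r\<in>UNIV. s a1 r * (\<Sum>t\<in>UNIV. m r b1 t * m t y1 p)))
    = (\<Sum>q\<in>UNIV. D p q * m a q c)"
    (is "(\<Sum>a1\<in>UNIV. \<Sum>a2\<in>UNIV. \<Sum>b1\<in>UNIV. \<Sum>b2\<in>UNIV. \<Sum>y1\<in>UNIV. \<Sum>y2\<in>UNIV.
          d a a1 a2 * d a2 b1 b2 * D y1 y2 * m b2 y2 c * ?A a1 b1 y1) = _")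
proof -
  have "(\<Sum>a1\<in>UNIV. \<Sum>a2\<in>UNIV. \<Sum>b1\<in>UNIV. \<Sum>b2\<in>UNIV. \<Sum>y1\<in>UNIV. \<Sum>y2\<in>UNIV.
         d a a1 a2 * d a2 b1 b2 * D y1 y2 * m b2 y2 c * ?A a1 b1 y1)
    = (\<Sum>a1\<in>UNIV. \<Sum>b1\<in>UNIV. \<Sum>b2\<in>UNIV. \<Sum>y1\<in>UNIV. \<Sum>y2\<in>UNIV.
         (\<Sum>a2\<in>UNIV. d a a1 a2 * d a2 b1 b2) * D y1 y2 * m b2 y2 c * ?A a1 b1 y1)"
    by (rule sum.cong[OF refl], rule trans[OF sum_push4]) (simp add: sum_distrib_right)
  also have "\<dots> = (\<Sum>a1\<in>UNIV. \<Sum>b1\<in>UNIV. \<Sum>b2\<in>UNIV. \<Sum>y1\<in>UNIV. \<Sum>y2\<in>UNIV.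
         (\<Sum>x\<in>UNIV. d a x b2 * d x a1 b1) * D y1 y2 * m b2 y2 c * ?A a1 b1 y1)"
    by (simp only: hopf_coassoc_sc[OF H])
  also have "\<dots> = (\<Sum>a1\<in>UNIV. \<Sum>b1\<in>UNIV. \<Sum>b2\<in>UNIV. \<Sum>y1\<in>UNIV. \<Sum>y2\<in>UNIV. \<Sum>x\<in>UNIV.
         d a x b2 * D y1 y2 * m b2 y2 c * (d x a1 b1 * ?A a1 b1 y1))"
    by (simp only: sum_distrib_right, (rule sum.cong[OF refl])+, simp only: mult_ac)
  also have "\<dots> = (\<Sum>x\<in>UNIV. \<Sum>b2\<in>UNIV. \<Sum>y1\<in>UNIV. \<Sum>y2\<in>UNIV. \<Sum>a1\<in>UNIV. \<Sum>b1\<in>UNIV.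
         d a x b2 * D y1 y2 * m b2 y2 c * (d x a1 b1 * ?A a1 b1 y1))"
    by (subst sum_push5[symmetric]) (rule sum.cong[OF refl], rule trans[OF sum.cong[OF refl sum_push3] sum_push3])
  also have "\<dots> = (\<Sum>x\<in>UNIV. \<Sum>b2\<in>UNIV. \<Sum>y1\<in>UNIV. \<Sum>y2\<in>UNIV.
         d a x b2 * D y1 y2 * m b2 y2 c * (ep x * (if y1 = p then 1 else 0)))"
    by (simp only: sum_distrib_left[symmetric] antipode_cancel_left[OF H])
  also have "\<dots> = (\<Sum>x\<in>UNIV. \<Sum>b2\<in>UNIV. \<Sum>y2\<in>UNIV. ep x * d a x b2 * (D p y2 * m b2 y2 c))"
    by (simp add: mult_ac)
  also have "\<dots> = (\<Sum>b2\<in>UNIV. \<Sum>y2\<in>UNIV. (\<Sum>x\<in>UNIV. ep x * d a x b2) * (D p y2 * m b2 y2 c))"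
    by (subst sum_push2) (simp only: sum_distrib_right)
  also have "\<dots> = (\<Sum>q\<in>UNIV. D p q * m a q c)"
    by (simp add: hopf_counit_sc(1)[OF H])
  finally show ?thesis .
qed

text \<open>Transfer identity for a left integral L:  L_1 \<otimes> h L_2 = S(h) L_1 \<otimes> L_2.\<close>
lemma integral_transfer:
  assumes H: "is_hopf_algebra m u d ep s" and L: "left_integral m ep L"
  shows "(\<Sum>q\<in>UNIV. comul d L (p, q) * m a q c)
    = (\<Sum>r\<in>UNIV. s a r * (\<Sum>q\<in>UNIV. m r q p * comul d L (q, c)))"
  using integral_transfer_expand[OF H L] integral_transfer_collapse[OF H] by simp

text \<open>With \<epsilon>(L) = 1 the antipode axiom gives 1 = S(L_1) L_2; rewriting S(e_p) L_2 via the
  transfer identity shows 1 = \<psi>(L_1) L_2 for an explicit functional \<psi>.\<close>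
lemma unit_integral_slice:
  assumes H: "is_hopf_algebra m u d ep s"
    and L1: "counit ep L = 1" and L: "left_integral m ep L"
  obtains \<psi> where "\<And>t. u t = (\<Sum>q\<in>UNIV. \<psi> q * comul d L (q, t))"
proof -
  define D where "D = (\<lambda>p q. comul d L (p, q))"
  define \<psi> where "\<psi> = (\<lambda>q. \<Sum>p\<in>UNIV. \<Sum>r\<in>UNIV. \<Sum>r'\<in>UNIV. s p r * s r r' * m r' q p)"
  have "u t = (\<Sum>q\<in>UNIV. \<psi> q * D q t)" for t
  proof -
    have "(\<lambda>c. \<Sum>p\<in>UNIV. \<Sum>q\<in>UNIV. comul d L (p, q) * hmul m (antip s (bv p)) (bv q) c)
        = (\<lambda>c. counit ep L * u c)"
      using H unfolding is_hopf_algebra_def by blast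
    then have "u t = (\<Sum>p\<in>UNIV. \<Sum>q\<in>UNIV. D p q * (\<Sum>r\<in>UNIV. s p r * m r q t))"
      using L1 by (simp add: D_def hmul_def antip_def bv_def fun_eq_iff)
    also have "\<dots> = (\<Sum>p\<in>UNIV. \<Sum>r\<in>UNIV. s p r * (\<Sum>q\<in>UNIV. D p q * m r q t))"
      by (simp only: sum_distrib_left, rule sum.cong[OF refl], subst sum.swap)
         (simp add: sum_distrib_left mult_ac)
    also have "\<dots> = (\<Sum>p\<in>UNIV. \<Sum>r\<in>UNIV. s p r * (\<Sum>r'\<in>UNIV. s r r' * (\<Sum>q\<in>UNIV. m r' q p * D q t)))"
      by (simp only: D_def integral_transfer[OF H L])
    also have "\<dots> = (\<Sum>p\<in>UNIV. \<Sum>r\<in>UNIV. \<Sum>r'\<in>UNIV. \<Sum>q\<in>UNIV. s p r * s r r' * m r' q p * D q t)"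
      by (simp add: sum_distrib_left mult_ac)
    also have "\<dots> = (\<Sum>q\<in>UNIV. \<psi> q * D q t)"
      by (subst sum_push3[symmetric]) (simp add: \<psi>_def sum_distrib_left sum_distrib_right mult_ac)
    finally show ?thesis .
  qed
  then show ?thesis using that unfolding D_def by blast
qed

text \<open>The antipode of a semisimple Hopf algebra has trivial kernel: if S(h) = 0 then
  h = h 1 = \<psi>(L_1) h L_2 = \<psi>(S(h) L_1) L_2 = 0.\<close>
lemma antip_kernel_trivial:
  assumes H: "is_hopf_algebra m u d ep s" and SS: "semisimple_alg m"
    and h0: "antip s h = (\<lambda>_. 0)"
  shows "h = (\<lambda>_. 0)"
proof
  fix c
  obtain L where L1: "counit ep L = 1" and L: "left_integral m ep L"
    using left_integral_exists[OF H SS] .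
  obtain \<psi> where unit: "\<And>t. u t = (\<Sum>q\<in>UNIV. \<psi> q * comul d L (q, t))"
    using unit_integral_slice[OF H L1 L] by blast
  have Sh: "(\<Sum>a\<in>UNIV. h a * s a r) = 0" for r
    using fun_cong[OF h0, of r] by (simp add: antip_def)
  have "h c = hmul m h u c"
    using H unfolding is_hopf_algebra_def by metis
  also have "\<dots> = (\<Sum>a\<in>UNIV. \<Sum>t\<in>UNIV. \<Sum>q\<in>UNIV. h a * \<psi> q * comul d L (q, t) * m a t c)"
    by (simp add: hmul_def unit sum_distrib_left sum_distrib_right mult_ac)
  also have "\<dots> = (\<Sum>q\<in>UNIV. \<Sum>a\<in>UNIV. \<Sum>t\<in>UNIV. h a * \<psi> q * comul d L (q, t) * m a t c)"
    by (rule sum_push2[symmetric])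
  also have "\<dots> = (\<Sum>q\<in>UNIV. \<psi> q * (\<Sum>a\<in>UNIV. h a * (\<Sum>t\<in>UNIV. comul d L (q, t) * m a t c)))"
    by (simp add: sum_distrib_left mult_ac)
  also have "\<dots> = (\<Sum>q\<in>UNIV. \<psi> q * (\<Sum>a\<in>UNIV. \<Sum>r\<in>UNIV.
                       h a * s a r * (\<Sum>q'\<in>UNIV. m r q' q * comul d L (q', c))))"
    by (simp only: integral_transfer[OF H L]) (simp add: sum_distrib_left mult_ac)
  also have "\<dots> = (\<Sum>q\<in>UNIV. \<psi> q * (\<Sum>r\<in>UNIV.
                       (\<Sum>a\<in>UNIV. h a * s a r) * (\<Sum>q'\<in>UNIV. m r q' q * comul d L (q', c))))"
    by (simp only: sum_distrib_right, rule sum.cong[OF refl], rule arg_cong[where f="times _"], rule sum.swap)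
  also have "\<dots> = 0" by (simp add: Sh)
  finally show "h c = 0" .
qed

lemma antip_add: "antip s (x + y) = antip s x + antip s y"
  by (simp add: antip_def fun_eq_iff sum.distrib algebra_simps)

lemma antip_diff: "antip s (x - y) = antip s x - antip s y"
  by (simp add: antip_def fun_eq_iff sum_subtractf algebra_simps)

lemma antip_inj:
  assumes H: "is_hopf_algebra m u d ep s" and SS: "semisimple_alg m"
  shows "inj (antip s)"
proof (rule injI)
  fix x y assume "antip s x = antip s y"
  then have "antip s (x - y) = (\<lambda>_. 0)" by (simp add: antip_diff fun_eq_iff)
  then have "x - y = (\<lambda>_. 0)" by (rule antip_kernel_trivial[OF H SS])
  then show "x = y" by (simp add: fun_eq_iff)
qed

text \<open>Coordinate vectors 'i \<Rightarrow> 'k form a vector space with basis {e_a}; this gives access to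
  the library's dimension theory.\<close>
definition fsc :: "'k::field \<Rightarrow> ('i \<Rightarrow> 'k) \<Rightarrow> ('i \<Rightarrow> 'k)" where
  "fsc r f = (\<lambda>c. r * f c)"

interpretation fvs: vector_space "fsc :: 'k::field \<Rightarrow> ('i \<Rightarrow> 'k) \<Rightarrow> _"
  by unfold_locales (auto simp: fsc_def fun_eq_iff algebra_simps)

lemma antip_scale: "antip s (fsc r x) = fsc r (antip s x)"
  by (simp add: antip_def fsc_def fun_eq_iff sum_distrib_left algebra_simps)

lemma bv_inj: "inj (bv :: 'i \<Rightarrow> 'i \<Rightarrow> 'k::field)"
  by (rule injI) (metis bv_def one_neq_zero)

lemma sum_fun_apply: "(\<Sum>v\<in>t. (f v :: 'i \<Rightarrow> 'k::field)) c = (\<Sum>v\<in>t. f v c)"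
  by (induction t rule: infinite_finite_induct) auto

interpretation fdvs: finite_dimensional_vector_space
  "fsc :: 'k::field \<Rightarrow> ('i::finite \<Rightarrow> 'k) \<Rightarrow> _" "range bv"
proof unfold_locales
  show "finite (range (bv :: 'i \<Rightarrow> 'i \<Rightarrow> 'k))" by simp
  show "\<not> fvs.dependent (range (bv :: 'i \<Rightarrow> 'i \<Rightarrow> 'k))"
  proof
    assume "fvs.dependent (range (bv :: 'i \<Rightarrow> 'i \<Rightarrow> 'k))"
    then obtain t w where t: "finite t" "t \<subseteq> range (bv :: 'i \<Rightarrow> 'i \<Rightarrow> 'k)"
      "(\<Sum>v\<in>t. fsc (w v) v) = 0" "\<exists>v\<in>t. w v \<noteq> 0"
      unfolding fvs.dependent_explicit by blast
    then obtain a where a: "bv a \<in> t" "w (bv a) \<noteq> 0" by blast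
    have "(\<Sum>v\<in>t. fsc (w v) v) a = 0" using t(3) by simp
    then have "(\<Sum>v\<in>t. w v * v a) = 0" by (simp add: sum_fun_apply fsc_def)
    also have "(\<Sum>v\<in>t. w v * v a) = (\<Sum>v\<in>t. if v = bv a then w v else 0)"
    proof (rule sum.cong[OF refl])
      fix v assume "v \<in> t"
      then obtain b where b: "v = bv b" using t(2) by blast
      have "(bv b = (bv a :: 'i \<Rightarrow> 'k)) = (b = a)" using bv_inj[where 'k='k] by (meson injD)
      then show "w v * v a = (if v = bv a then w v else 0)"
        by (simp add: b bv_def)
    qed
    also have "\<dots> = w (bv a)" using t(1) a(1) by simp
    finally show False using a(2) by simp
  qed
  show "fvs.span (range bv) = (UNIV :: ('i \<Rightarrow> 'k) set)"
  proof (rule set_eqI, rule iffI, simp)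
    fix f :: "'i \<Rightarrow> 'k"
    have "f = (\<Sum>a\<in>UNIV. fsc (f a) (bv a))"
      by (rule ext) (simp add: sum_fun_apply fsc_def bv_def)
    also have "\<dots> \<in> fvs.span (range bv)"
      by (intro fvs.span_sum fvs.span_scale fvs.span_base) auto
    finally show "f \<in> fvs.span (range bv)" .
  qed
qed

lemma is_subspace_subspace: "is_subspace K \<Longrightarrow> fvs.subspace K"
  unfolding is_subspace_def fvs.subspace_def
  by (auto simp: fsc_def plus_fun_def zero_fun_def)

text \<open>An injective linear endomorphism of a finite-dimensional space maps every invariant
  subspace onto itself (dimension count).\<close>
lemma inj_linear_invariant_onto:
  fixes S :: "('i::finite \<Rightarrow> 'k::field) \<Rightarrow> ('i \<Rightarrow> 'k)"
  assumes lin: "\<And>x y. S (x + y) = S x + S y" "\<And>r x. S (fsc r x) = fsc r (S x)"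
    and inj: "inj S" and K: "is_subspace K" and SK: "S ` K \<subseteq> K"
  shows "S ` K = K"
proof -
  interpret p: finite_dimensional_vector_space_pair_1
    "fsc :: 'k \<Rightarrow> ('i \<Rightarrow> 'k) \<Rightarrow> _" "range bv" "fsc :: 'k \<Rightarrow> ('i \<Rightarrow> 'k) \<Rightarrow> _"
    by unfold_locales
  have l: "Vector_Spaces.linear fsc fsc S"
    unfolding Vector_Spaces.linear_iff using fvs.vector_space_axioms by (auto simp: lin)
  have sK: "fvs.subspace K" by (rule is_subspace_subspace[OF K])
  have "fvs.dim (S ` K) = fvs.dim K"
    by (rule p.dim_image_eq[OF l], rule inj_on_subset[OF inj], simp)
  moreover have "fvs.subspace (S ` K)"
    using p.linear_subspace_image[OF l sK] .
  ultimately show ?thesis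
    using fdvs.subspace_dim_equal[of "S ` K" K] sK SK by simp
qed

lemma antip_hopf_subalgebra_onto:
  assumes H: "is_hopf_algebra m u d ep s" and SS: "semisimple_alg m"
    and K: "hopf_subalgebra m u d s K"
  shows "antip s ` K = K"
  using K unfolding hopf_subalgebra_def
  by (intro inj_linear_invariant_onto[OF antip_add antip_scale antip_inj[OF H SS]]) auto

lemma fev_antip_coords: "(\<Sum>q\<in>UNIV. z q * fev \<chi> (antip s (bv q))) = fev \<chi> (antip s z)"
proof -
  have "(\<Sum>q\<in>UNIV. z q * fev \<chi> (antip s (bv q))) = (\<Sum>q\<in>UNIV. \<Sum>a\<in>UNIV. z q * (\<chi> a * s q a))"
    by (simp add: fev_def antip_def bv_def sum_distrib_left)
  also have "\<dots> = (\<Sum>a\<in>UNIV. \<Sum>q\<in>UNIV. z q * (\<chi> a * s q a))" by (rule sum.swap)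
  also have "\<dots> = fev \<chi> (antip s z)"
    by (simp add: fev_def antip_def sum_distrib_left mult_ac)
  finally show ?thesis .
qed

lemma counit_comul_left:
  assumes H: "is_hopf_algebra m u d ep s"
  shows "(\<Sum>c\<in>UNIV. ep c * (\<Sum>q\<in>UNIV. comul d x (c, q) * g q)) = (\<Sum>q\<in>UNIV. x q * g q)"
proof -
  have "(\<Sum>c\<in>UNIV. ep c * (\<Sum>q\<in>UNIV. comul d x (c, q) * g q))
      = (\<Sum>c\<in>UNIV. \<Sum>q\<in>UNIV. \<Sum>a\<in>UNIV. x a * g q * (ep c * d a c q))"
    by (simp add: comul_def sum_distrib_left sum_distrib_right mult_ac)
  also have "\<dots> = (\<Sum>q\<in>UNIV. \<Sum>a\<in>UNIV. x a * g q * (\<Sum>c\<in>UNIV. ep c * d a c q))"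
    by (subst sum_push2) (simp add: sum_distrib_left)
  also have "\<dots> = (\<Sum>q\<in>UNIV. x q * g q)"
    by (simp add: hopf_counit_sc(1)[OF H])
  finally show ?thesis .
qed

text \<open>If \<chi> \<in> C^2_H(K), applying \<epsilon> to the first leg of x_1 \<chi>(S(x_2)) = 0 gives \<chi>(S(x)) = 0
  for x \<in> K; when S(K) = K this says \<chi> \<in> K^\<perp>.\<close>
lemma C2_subset_perp:
  assumes H: "is_hopf_algebra m u d ep s" and SK: "antip s ` K = K"
  shows "C2 m u d s K \<subseteq> perp K"
proof
  fix \<chi> assume "\<chi> \<in> C2 m u d s K"
  then have slice: "(\<lambda>c. \<Sum>q\<in>UNIV. comul d x (c, q) * fev \<chi> (antip s (bv q))) = (\<lambda>_. 0)"
    if "x \<in> K" for x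
    using that unfolding C2_def by blast
  have vanish: "fev \<chi> (antip s x) = 0" if "x \<in> K" for x
  proof -
    have "fev \<chi> (antip s x)
        = (\<Sum>c\<in>UNIV. ep c * (\<Sum>q\<in>UNIV. comul d x (c, q) * fev \<chi> (antip s (bv q))))"
      using counit_comul_left[OF H, of x "\<lambda>q. fev \<chi> (antip s (bv q))"] fev_antip_coords[of x \<chi> s]
      by simp
    also have "\<dots> = 0" using slice[OF that] by (simp add: fun_eq_iff)
    finally show ?thesis .
  qed
  show "\<chi> \<in> perp K"
  proof (unfold perp_def, intro CollectI ballI)
    fix k assume "k \<in> K"
    then obtain x where "x \<in> K" "k = antip s x"
      using SK by (metis imageE)
    then show "fev \<chi> k = 0" using vanish by simp
  qed
qed

text \<open>Conversely, if \<chi> vanishes on K then, since \<Delta>(K) \<subseteq> K \<otimes> K and S(K) \<subseteq> K,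
  every x_1 \<chi>(S(x_2)) with x \<in> K vanishes.\<close>
lemma perp_subset_C2:
  assumes K: "hopf_subalgebra m u d s K"
  shows "char_ring m u \<inter> perp K \<subseteq> C2 m u d s K"
proof
  fix \<chi> assume \<chi>: "\<chi> \<in> char_ring m u \<inter> perp K"
  have \<chi>S: "fev \<chi> (antip s z) = 0" if "z \<in> K" for z
    using \<chi> that K unfolding perp_def hopf_subalgebra_def by blast
  have "(\<Sum>q\<in>UNIV. comul d x (c, q) * fev \<chi> (antip s (bv q))) = 0" if x: "x \<in> K" for x c
  proof -
    obtain T r where T: "finite T" "T \<subseteq> {tens y z | y z. y \<in> K \<and> z \<in> K}"
      and Dx: "comul d x = (\<lambda>w. \<Sum>v\<in>T. r v * v w)"
      using K x unfolding hopf_subalgebra_def lin_span_def by blast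
    have "(\<Sum>q\<in>UNIV. comul d x (c, q) * fev \<chi> (antip s (bv q)))
        = (\<Sum>v\<in>T. r v * (\<Sum>q\<in>UNIV. v (c, q) * fev \<chi> (antip s (bv q))))"
      by (simp add: Dx sum_distrib_left sum_distrib_right mult_ac sum.swap[of _ UNIV T])
    also have "\<dots> = 0"
    proof (rule sum.neutral, rule ballI)
      fix v assume "v \<in> T"
      then obtain y z where v: "v = tens y z" "z \<in> K" using T(2) by blast
      have "(\<Sum>q\<in>UNIV. v (c, q) * fev \<chi> (antip s (bv q)))
          = y c * (\<Sum>q\<in>UNIV. z q * fev \<chi> (antip s (bv q)))"
        by (simp add: v tens_def sum_distrib_left mult_ac)
      also have "\<dots> = 0" by (simp add: fev_antip_coords \<chi>S[OF v(2)])
      finally show "r v * (\<Sum>q\<in>UNIV. v (c, q) * fev \<chi> (antip s (bv q))) = 0" by simp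
    qed
    finally show ?thesis .
  qed
  then show "\<chi> \<in> C2 m u d s K" using \<chi> unfolding C2_def by (auto simp: fun_eq_iff)
qed

lemma char_perp_eq_ker_res: "char_ring m u \<inter> perp K = ker_res m u K"
  unfolding ker_res_def perp_def res_def by (auto simp: fun_eq_iff)

theorem mainTheorem15:
  fixes m d :: "'i::finite \<Rightarrow> 'i \<Rightarrow> 'i \<Rightarrow> 'k::field_char_0"
    and u ep :: "'i \<Rightarrow> 'k"
    and s :: "'i \<Rightarrow> 'i \<Rightarrow> 'k"
    and K :: "('i \<Rightarrow> 'k) set"
  assumes "alg_closed TYPE('k)"
    and "is_hopf_algebra m u d ep s"
    and "semisimple_alg m"
    and "normal_hopf_subalgebra m u d s K"
  shows "C2 m u d s K = char_ring m u \<inter> perp K \<and> char_ring m u \<inter> perp K = ker_res m u K"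
proof -
  have K: "hopf_subalgebra m u d s K"
    using assms(4) unfolding normal_hopf_subalgebra_def by blast
  have "antip s ` K = K"
    by (rule antip_hopf_subalgebra_onto[OF assms(2,3) K])
  then have "C2 m u d s K \<subseteq> char_ring m u \<inter> perp K"
    using C2_subset_perp[OF assms(2)] unfolding C2_def by blast
  moreover have "char_ring m u \<inter> perp K \<subseteq> C2 m u d s K"
    by (rule perp_subset_C2[OF K])
  ultimately show ?thesis
    using char_perp_eq_ker_res by blast
qed

end
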